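(* Let $J:[0,1]\to\mathbb{R}$ be continuous with $J(0)=J(1)=0$, twice differentiable on $(0,1)$ with $J''(p)<0$ for all $p\in(0,1)$. For $p_0,a\in(0,1)$ define the Bayes risk error divergence $$d(p_0\|a)=-J(p_0)+J(a)+(p_0-a)J'(a).$$ Fix a cell $[b_{k-1},b_k]$ with $0\le b_{k-1}<b_k\le 1$. Then the problem $$\min_{a\in(b_{k-1},b_k)}\ \max_{p_0\in[b_{k-1},b_k]} d(p_0\|a)$$ is solved by the (unique) point $a_k\in(b_{k-1},b_k)$ satisfying $$J'(a_k)=\frac{J(b_k)-J(b_{k-1})}{b_k-b_{k-1}}.$$
   Context: In binary hypothesis testing with prior $p_0=\Pr[H=h_0]$, costs $c_{10},c_{01}>0$ and deterministic likelihood ratio test decision rules, $J(p_0)=c_{10}p_0p_E^{\mathrm{I}}(p_0)+c_{01}(1-p_0)p_E^{\mathrm{II}}(p_0)$ is the Bayes risk, which is zero at $p_0\in\{0,1\}$, positive, continuous and strictly concave on $(0,1)$. A decision weight $a$ is the prior value used in the likelihood ratio test threshold; the mismatched Bayes risk is $J(p_0,a)=J(a)+(p_0-a)J'(a)$, and $d(p_0\|a)=J(p_0,a)-J(p_0)$. For the theorem only the stated analytic properties of $J$ are used. *)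

theory Defs
  imports "HOL-Analysis.Analysis"
begin

definition bayes_div :: "(real \<Rightarrow> real) \<Rightarrow> (real \<Rightarrow> real) \<Rightarrow> real \<Rightarrow> real \<Rightarrow> real" where
  "bayes_div J J' p0 a = - J p0 + J a + (p0 - a) * J' a"

definition max_div :: "(real \<Rightarrow> real) \<Rightarrow> (real \<Rightarrow> real) \<Rightarrow> real \<Rightarrow> real \<Rightarrow> real \<Rightarrow> real" where
  "max_div J J' l u a = (SUP p0\<in>{l..u}. bayes_div J J' p0 a)"

end

theory Submission
  imports Defs
begin

(* Write d(p || a) = -J p + J a + (p - a) J'(a): the gap at p between the tangent of J at a
   and J itself.  Since J'' < 0, J' is strictly decreasing, so J is concave on every
   cell [l,u] of [0,1] (continuity at the end points suffices, derivatives are only needed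
   inside).  Concavity gives two facts:
   (1) d(p || a) >= 0 (tangent lines lie above J), and
   (2) p |-> d(p || a) is convex, so its maximum over [l,u] is attained at an end point.
   The point ak with J'(ak) equal to the chord slope exists by the mean value theorem and is
   unique by strict monotonicity of J'.  For it both end-point values of d(. || ak) coincide,
   and writing ak = (1-t) l + t u, the average (1-t) d(l || a) + t d(u || a), which bounds the
   worst case of a from below, exceeds the worst case of ak exactly by d(ak || a) >= 0. *)

lemma mean_value_interior:
  fixes J J' :: "real \<Rightarrow> real"
  assumes "x < y" and "continuous_on {x..y} J"
    and "\<And>t. t \<in> {x<..<y} \<Longrightarrow> (J has_real_derivative J' t) (at t)"
  shows "\<exists>z\<in>{x<..<y}. J y - J x = (y - x) * J' z"
proof -
  have "J differentiable (at t)" if "x < t" "t < y" for t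
    using assms(3) that real_differentiable_def by fastforce
  then obtain l z where z: "x < z" "z < y" "(J has_real_derivative l) (at z)"
      "J y - J x = (y - x) * l"
    using MVT[OF assms(1,2)] by blast
  have "l = J' z"
    using z(1-3) assms(3) DERIV_unique by fastforce
  with z show ?thesis by auto
qed

lemma deriv_strict_antimono_if_second_deriv_neg:
  fixes J' J'' :: "real \<Rightarrow> real"
  assumes d2: "\<And>t. t \<in> {l<..<u} \<Longrightarrow> (J' has_real_derivative J'' t) (at t)"
    and neg: "\<And>t. t \<in> {l<..<u} \<Longrightarrow> J'' t < 0"
    and xy: "l < x" "x < y" "y < u"
  shows "J' y < J' x"
proof (rule DERIV_neg_imp_decreasing[OF \<open>x < y\<close>])
  fix t assume "x \<le> t" "t \<le> y"
  then have "t \<in> {l<..<u}"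
    using xy by auto
  then show "\<exists>D. (J' has_real_derivative D) (at t) \<and> D < 0"
    using d2 neg by blast
qed

(* A function continuous on [l,u] whose derivative is antitone on (l,u) is concave on [l,u]:
   the secant slopes left and right of an intermediate point are derivative values, ordered. *)
lemma concave_on_Icc_if_deriv_antimono:
  fixes J J' :: "real \<Rightarrow> real"
  assumes cont: "continuous_on {l..u} J"
    and deriv: "\<And>t. t \<in> {l<..<u} \<Longrightarrow> (J has_real_derivative J' t) (at t)"
    and anti: "\<And>s t. l < s \<Longrightarrow> s \<le> t \<Longrightarrow> t < u \<Longrightarrow> J' t \<le> J' s"
  shows "concave_on {l..u} J"
proof (rule concave_on_linorderI)
  fix t x y :: real
  assume t: "0 < t" "t < 1" and xy: "x \<in> {l..u}" "y \<in> {l..u}" "x < y"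
  define z where "z = (1 - t) * x + t * y"
  have zx: "z - x = t * (y - x)" and yz: "y - z = (1 - t) * (y - x)"
    unfolding z_def by (simp_all add: algebra_simps)
  have "0 < z - x" "0 < y - z"
    unfolding zx yz using t xy(3) by simp_all
  then have xz: "x < z" and zy: "z < y"
    by simp_all
  have sub: "{v..w} \<subseteq> {l..u}" if "v \<in> {l..u}" "w \<in> {l..u}" for v w
    using that by auto
  obtain s1 where s1: "s1 \<in> {x<..<z}" "J z - J x = (z - x) * J' s1"
    using mean_value_interior[OF xz continuous_on_subset[OF cont sub]] deriv xy xz zy
    by (smt (verit, ccfv_threshold) atLeastAtMost_iff greaterThanLessThan_iff)
  obtain s2 where s2: "s2 \<in> {z<..<y}" "J y - J z = (y - z) * J' s2"
    using mean_value_interior[OF zy continuous_on_subset[OF cont sub]] deriv xy xz zy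
    by (smt (verit, ccfv_threshold) atLeastAtMost_iff greaterThanLessThan_iff)
  have "J' s2 \<le> J' s1"
    using anti s1(1) s2(1) xy by auto
  have inc1: "J z - J x = t * (y - x) * J' s1" and inc2: "J y - J z = (1 - t) * (y - x) * J' s2"
    using zx yz s1(2) s2(2) by simp_all
  have "(1 - t) * (J z - J x) - t * (J y - J z) = t * (1 - t) * (y - x) * (J' s1 - J' s2)"
    unfolding inc1 inc2 by (simp add: algebra_simps)
  also have "\<dots> \<ge> 0"
    using t xy(3) \<open>J' s2 \<le> J' s1\<close> by simp
  finally show "(1 - t) * J x + t * J y \<le> J ((1 - t) *\<^sub>R x + t *\<^sub>R y)"
    unfolding z_def by (simp add: algebra_simps)
qed (rule convex_real_interval)

(* The divergence is nonnegative: a tangent of a concave function lies above its graph. *)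
lemma bayes_div_nonneg_if_concave:
  fixes J J' :: "real \<Rightarrow> real"
  assumes conc: "concave_on {l..u} J" and a: "a \<in> {l<..<u}" and p: "p \<in> {l..u}"
    and deriv: "(J has_real_derivative J' a) (at a)"
  shows "0 \<le> bayes_div J J' p a"
proof -
  have "(J has_real_derivative J' a) (at a within {l..u})"
    using deriv by (rule has_field_derivative_at_within)
  then have "((\<lambda>x. - J x) has_real_derivative - J' a) (at a within {l..u})"
    by (rule DERIV_minus)
  then have "- J' a * (p - a) \<le> - J p - - J a"
    using conc a p unfolding concave_on_def
    by (intro convex_on_imp_above_tangent) auto
  then show ?thesis
    unfolding bayes_div_def by (simp add: algebra_simps)
qed

lemma convex_combination_of_Icc:
  fixes l u p :: real
  assumes "l < u" "p \<in> {l..u}"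
  obtains t where "0 \<le> t" "t \<le> 1" "p = (1 - t) * l + t * u"
proof -
  define t where "t = (p - l) / (u - l)"
  have t_bounds: "0 \<le> t" "t \<le> 1"
    using assms unfolding t_def by auto
  have "t * (u - l) = p - l"
    using assms(1) unfolding t_def by simp
  then have "p = (1 - t) * l + t * u"
    by (simp add: algebra_simps)
  with t_bounds show ?thesis
    by (rule that)
qed

lemma convex_combination_le_max:
  fixes x y t :: real
  assumes "0 \<le> t" "t \<le> 1"
  shows "(1 - t) * x + t * y \<le> max x y"
proof -
  have "(1 - t) * x + t * y \<le> (1 - t) * max x y + t * max x y"
    using assms by (intro add_mono mult_left_mono) auto
  then show ?thesis
    by (simp add: algebra_simps)
qed

(* The divergence is affine in p apart from -J p: averaging over the end points of a segment
   equals the value at the averaged point plus the concavity gap of J there. *)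
lemma bayes_div_convex_combination:
  fixes J J' :: "real \<Rightarrow> real"
  shows "(1 - t) * bayes_div J J' x a + t * bayes_div J J' y a
    = bayes_div J J' ((1 - t) * x + t * y) a + (J ((1 - t) * x + t * y) - ((1 - t) * J x + t * J y))"
  unfolding bayes_div_def by (simp add: algebra_simps)

lemma max_div_at_endpoints:
  fixes J J' :: "real \<Rightarrow> real"
  assumes conc: "concave_on {l..u} J" and "l < u"
  shows "max_div J J' l u a = max (bayes_div J J' l a) (bayes_div J J' u a)"
  unfolding max_div_def
proof (rule cSup_eq_maximum)
  let ?M = "max (bayes_div J J' l a) (bayes_div J J' u a)"
  show "?M \<in> (\<lambda>p. bayes_div J J' p a) ` {l..u}"
    using \<open>l < u\<close> by (cases "bayes_div J J' l a \<le> bayes_div J J' u a") (auto simp: max_def)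
  show "x \<le> ?M" if x_in: "x \<in> (\<lambda>p. bayes_div J J' p a) ` {l..u}" for x
  proof -
    obtain p where p: "p \<in> {l..u}" and x: "x = bayes_div J J' p a"
      using x_in by blast
    obtain t where t: "0 \<le> t" "t \<le> 1" and pt: "p = (1 - t) * l + t * u"
      using convex_combination_of_Icc[OF \<open>l < u\<close> p] by blast
    have "(1 - t) * J l + t * J u \<le> J p"
      using concave_onD[OF conc t] \<open>l < u\<close> pt by simp
    then have "x \<le> (1 - t) * bayes_div J J' l a + t * bayes_div J J' u a"
      using bayes_div_convex_combination[of t J J' l a u] x pt by simp
    also have "\<dots> \<le> ?M"
      by (rule convex_combination_le_max[OF t])
    finally show ?thesis .
  qed
qed

lemma minimax_at_chord_slope:
  fixes J J' :: "real \<Rightarrow> real"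
  assumes conc: "concave_on {l..u} J" and "l < u"
    and ak: "ak \<in> {l<..<u}" and slope: "J' ak = (J u - J l) / (u - l)"
    and tangent: "0 \<le> bayes_div J J' ak a"
  shows "max_div J J' l u ak \<le> max_div J J' l u a"
proof -
  obtain t where t: "0 \<le> t" "t \<le> 1" and ak_t: "ak = (1 - t) * l + t * u"
    using convex_combination_of_Icc[OF \<open>l < u\<close>, of ak] ak by auto
  define gap where "gap = J ak - ((1 - t) * J l + t * J u)"
  have "(u - l) * J' ak = J u - J l"
    using slope \<open>l < u\<close> by simp
  then have equal: "bayes_div J J' l ak = bayes_div J J' u ak"
    unfolding bayes_div_def by (simp add: algebra_simps)
  have "max_div J J' l u ak = (1 - t) * bayes_div J J' l ak + t * bayes_div J J' u ak"
    using max_div_at_endpoints[OF conc \<open>l < u\<close>] equal by (simp add: algebra_simps)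
  also have "\<dots> = gap"
    using bayes_div_convex_combination[of t J J' l ak u] ak_t
    unfolding gap_def by (simp add: bayes_div_def)
  also have "\<dots> \<le> bayes_div J J' ak a + gap"
    using tangent by simp
  also have "\<dots> = (1 - t) * bayes_div J J' l a + t * bayes_div J J' u a"
    using bayes_div_convex_combination[of t J J' l a u] ak_t unfolding gap_def by simp
  also have "\<dots> \<le> max_div J J' l u a"
    using max_div_at_endpoints[OF conc \<open>l < u\<close>] convex_combination_le_max[OF t] by simp
  finally show ?thesis .
qed

theorem theorem1:
  fixes J J' J'' :: "real \<Rightarrow> real" and b0 b1 :: real
  assumes cont: "continuous_on {0..1} J"
    and J0: "J 0 = 0" and J1: "J 1 = 0"
    and d1: "\<And>p. p \<in> {0<..<1} \<Longrightarrow> (J has_real_derivative J' p) (at p)"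
    and d2: "\<And>p. p \<in> {0<..<1} \<Longrightarrow> (J' has_real_derivative J'' p) (at p)"
    and neg: "\<And>p. p \<in> {0<..<1} \<Longrightarrow> J'' p < 0"
    and cell: "0 \<le> b0" "b0 < b1" "b1 \<le> 1"
  shows "(\<exists>!ak. ak \<in> {b0<..<b1} \<and> J' ak = (J b1 - J b0) / (b1 - b0))
    \<and> (\<forall>ak. ak \<in> {b0<..<b1} \<and> J' ak = (J b1 - J b0) / (b1 - b0) \<longrightarrow>
          (\<forall>a\<in>{b0<..<b1}. max_div J J' b0 b1 ak \<le> max_div J J' b0 b1 a))"
proof -
  have cont_cell: "continuous_on {b0..b1} J"
    using cont by (rule continuous_on_subset) (use cell in auto)
  have d1_cell: "\<And>t. t \<in> {b0<..<b1} \<Longrightarrow> (J has_real_derivative J' t) (at t)"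
    using d1 cell by auto
  have decreasing: "J' y < J' x" if "b0 < x" "x < y" "y < b1" for x y
    using deriv_strict_antimono_if_second_deriv_neg[OF d2 neg] that cell by auto
  have conc: "concave_on {b0..b1} J"
    using cont_cell d1_cell decreasing
    by (intro concave_on_Icc_if_deriv_antimono) (auto simp: le_less)
  obtain ak where ak: "ak \<in> {b0<..<b1}" "J b1 - J b0 = (b1 - b0) * J' ak"
    using mean_value_interior[OF cell(2) cont_cell d1_cell] by blast
  have unique: "x = y" if "x \<in> {b0<..<b1}" "y \<in> {b0<..<b1}" "J' x = J' y" for x y
    using decreasing[of x y] decreasing[of y x] that by (cases x y rule: linorder_cases) auto
  have optimal: "max_div J J' b0 b1 c \<le> max_div J J' b0 b1 a"
    if "c \<in> {b0<..<b1}" "J' c = (J b1 - J b0) / (b1 - b0)" "a \<in> {b0<..<b1}" for c a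
    using that cell d1_cell
    by (intro minimax_at_chord_slope[OF conc] bayes_div_nonneg_if_concave[OF conc]) auto
  show ?thesis
    using ak cell unique optimal by (intro conjI ex1I[of _ ak]) auto
qed

end
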